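(* Let $a^{\mathrm o}_{\ell,m}$, $m=-\ell,\dots,\ell$, $\ell\ge0$, be the Fourier coefficients of a (realization of a) field $T^{\mathrm o}\in L_2(\mathbb{S}^2)$, i.e. $T^{\mathrm o}=\sum_{\ell\ge0}\sum_{m=-\ell}^{\ell}a^{\mathrm o}_{\ell,m}Y_{\ell,m}$. Let $(\beta_\ell)_{\ell\ge0}$ be a sequence of positive numbers and $\lambda>0$. Consider the problem \[ \min_{\mathbf a}\ \tfrac12\sum_{\ell=0}^\infty\sum_{m=-\ell}^{\ell}|a_{\ell,m}-a^{\mathrm o}_{\ell,m}|^2+\lambda\sum_{\ell=0}^\infty\beta_\ell\Big(\sum_{m=-\ell}^{\ell}|a_{\ell,m}|^2\Big)^{1/2} \] over complex sequences $\mathbf a=(a_{\ell,m})$. Write $A^{\mathrm o}_\ell:=\big(\sum_{m=-\ell}^{\ell}|a^{\mathrm o}_{\ell,m}|^2\big)^{1/2}$. Then the solution is the field $T^{\mathrm r}=\sum_{\ell=0}^\infty\sum_{m=-\ell}^{\ell}a^{\mathrm r}_{\ell,m}Y_{\ell,m}$ (in the $L_2(\Omega\times\mathbb{S}^2)$ sense when $T^{\mathrm o}$ is a random field) with, for $m=-\ell,\dots,\ell$, $\ell\ge0$, \[ a^{\mathrm r}_{\ell,m}=\begin{cases}\Big(1-\dfrac{\lambda\beta_\ell}{A^{\mathrm o}_\ell}\Big)a^{\mathrm o}_{\ell,m}, & A^{\mathrm o}_\ell>\lambda\beta_\ell,\\ 0, & A^{\mathrm o}_\ell\le\lambda\beta_\ell,\end{cases}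 \qquad A^{\mathrm r}_\ell:=\Big(\sum_{m=-\ell}^{\ell}|a^{\mathrm r}_{\ell,m}|^2\Big)^{1/2}=\begin{cases}\Big(1-\dfrac{\lambda\beta_\ell}{A^{\mathrm o}_\ell}\Big)A^{\mathrm o}_\ell, & A^{\mathrm o}_\ell>\lambda\beta_\ell,\\ 0, & A^{\mathrm o}_\ell\le\lambda\beta_\ell.\end{cases} \]
   Context: $\mathbb{S}^2$ is the unit sphere in $\mathbb{R}^3$ with surface measure $\sigma$, $\sigma(\mathbb{S}^2)=4\pi$; $\{Y_{\ell,m}\}$ is the standard complex orthonormal basis of spherical harmonics of $L_2(\mathbb{S}^2)$, and the Fourier coefficients are $a^{\mathrm o}_{\ell,m}=\int_{\mathbb{S}^2}T^{\mathrm o}\overline{Y_{\ell,m}}\,d\sigma$. When $T^{\mathrm o}$ is a random field on a probability space $(\Omega,\mathcal F,\mathbb P)$, the problem is solved realization-wise and $L_2(\Omega\times\mathbb{S}^2)$ is the $L_2$ space for the product measure $\mathbb P\otimes\sigma$. *)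

theory Defs
  imports "HOL-Analysis.Analysis"
begin

text \<open>Coefficient sequences a(l,m), l \<ge> 0, m = -l..l, are modelled as
  functions nat \<Rightarrow> int \<Rightarrow> complex; only the values with |m| \<le> l matter.\<close>

definition degree_idx :: "nat \<Rightarrow> int set" where
  "degree_idx l = {- int l .. int l}"

definition group_norm :: "(nat \<Rightarrow> int \<Rightarrow> complex) \<Rightarrow> nat \<Rightarrow> real" where
  "group_norm a l = sqrt (\<Sum>m\<in>degree_idx l. (cmod (a l m))\<^sup>2)"

definition objective ::
  "real \<Rightarrow> (nat \<Rightarrow> real) \<Rightarrow> (nat \<Rightarrow> int \<Rightarrow> complex) \<Rightarrow> (nat \<Rightarrow> int \<Rightarrow> complex) \<Rightarrow> ennreal" where
  "objective lam beta ao a =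
     (\<Sum>l. ennreal (1/2 * (\<Sum>m\<in>degree_idx l. (cmod (a l m - ao l m))\<^sup>2)))
     + (\<Sum>l. ennreal (lam * beta l * group_norm a l))"

definition shrink_coeffs ::
  "real \<Rightarrow> (nat \<Rightarrow> real) \<Rightarrow> (nat \<Rightarrow> int \<Rightarrow> complex) \<Rightarrow> nat \<Rightarrow> int \<Rightarrow> complex" where
  "shrink_coeffs lam beta ao l m =
     (if group_norm ao l > lam * beta l
      then complex_of_real (1 - lam * beta l / group_norm ao l) * ao l m
      else 0)"

end

theory Submission
  imports Defs
begin

text \<open>The objective is a sum over degrees l of the functionals
  F(a) = 1/2 |a - a0|^2 + c |a| on the finite-dimensional blocks a = (a_{l,m})_m, with c = lam beta_l.
  For the block soft-thresholded vector r = t a0 one has F(r) + 1/2 |a - r|^2 \<le> F(a) for every a: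
  writing |a - a0|^2 = |r - a0|^2 + |a - r|^2 + 2(1 - t)(t |a0|^2 - <a, a0>), the cross term is
  controlled by Cauchy-Schwarz. Summing over degrees gives minimality, comparison with a = 0 gives
  finiteness, and equality of the objectives forces equality in every degree, hence a = r.\<close>

lemma sum_inner_le_L2_set:
  fixes x y :: "'i \<Rightarrow> 'a::real_inner"
  shows "(\<Sum>m\<in>I. inner (x m) (y m)) \<le> L2_set (\<lambda>m. norm (x m)) I * L2_set (\<lambda>m. norm (y m)) I"
proof -
  have "(\<Sum>m\<in>I. inner (x m) (y m)) \<le> (\<Sum>m\<in>I. \<bar>norm (x m)\<bar> * \<bar>norm (y m)\<bar>)"
    by (intro sum_mono) (simp add: norm_cauchy_schwarz)
  also have "\<dots> \<le> L2_set (\<lambda>m. norm (x m)) I * L2_set (\<lambda>m. norm (y m)) I"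
    by (rule L2_set_mult_ineq)
  finally show ?thesis .
qed

lemma norm_diff_squared_split_at_scaled:
  fixes x y :: "'a::real_inner"
  shows "(norm (x - y))\<^sup>2 = (norm (t *\<^sub>R y - y))\<^sup>2 + (norm (x - t *\<^sub>R y))\<^sup>2
           + 2 * (1 - t) * (t * (norm y)\<^sup>2 - inner x y)"
  by (simp add: power2_norm_eq_inner inner_commute algebra_simps)

lemma L2_set_norm_scaled:
  fixes x :: "'i \<Rightarrow> 'a::real_normed_vector"
  shows "L2_set (\<lambda>m. norm (t *\<^sub>R x m)) I = \<bar>t\<bar> * L2_set (\<lambda>m. norm (x m)) I"
  by (simp add: L2_set_right_distrib)

lemma sum_norm_squared_eq_L2_set:
  "(\<Sum>m\<in>I. (norm (x m))\<^sup>2) = (L2_set (\<lambda>m. norm (x m)) I)\<^sup>2"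
  by (simp add: L2_set_def sum_nonneg)

lemma block_soft_thresholding_inequality:
  fixes x x0 :: "'i \<Rightarrow> 'a::real_inner" and c :: real and I :: "'i set"
  assumes "c > 0"
  defines "A \<equiv> L2_set (\<lambda>m. norm (x0 m)) I"
  defines "t \<equiv> if A > c then 1 - c / A else 0"
  shows "1/2 * (\<Sum>m\<in>I. (norm (t *\<^sub>R x0 m - x0 m))\<^sup>2) + c * L2_set (\<lambda>m. norm (t *\<^sub>R x0 m)) I
           + 1/2 * (\<Sum>m\<in>I. (norm (x m - t *\<^sub>R x0 m))\<^sup>2)
         \<le> 1/2 * (\<Sum>m\<in>I. (norm (x m - x0 m))\<^sup>2) + c * L2_set (\<lambda>m. norm (x m)) I"
proof -
  define N where "N = L2_set (\<lambda>m. norm (x m)) I"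
  define P where "P = (\<Sum>m\<in>I. inner (x m) (x0 m))"
  have CS: "P \<le> N * A"
    unfolding P_def N_def A_def by (rule sum_inner_le_L2_set)
  have "A \<ge> 0" "N \<ge> 0" by (simp_all add: A_def N_def)
  have "t \<ge> 0" using assms(1) by (auto simp: t_def field_simps)
  have three_point: "(\<Sum>m\<in>I. (norm (x m - x0 m))\<^sup>2) = (\<Sum>m\<in>I. (norm (t *\<^sub>R x0 m - x0 m))\<^sup>2)
      + (\<Sum>m\<in>I. (norm (x m - t *\<^sub>R x0 m))\<^sup>2) + 2 * (1 - t) * (t * A\<^sup>2 - P)"
    by (simp add: norm_diff_squared_split_at_scaled[of "x _" "x0 _" t] sum.distrib sum_subtractf
        sum_distrib_left right_diff_distrib A_def P_def flip: sum_norm_squared_eq_L2_set)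
  have gain: "(1 - t) * (t * A\<^sup>2 - P) + c * N - c * (t * A) \<ge> 0"
  proof (cases "A > c")
    case True
    then have "A > 0" "1 - t = c / A" using assms(1) by (simp_all add: t_def)
    then have c_eq: "c = (1 - t) * A" by simp
    have "(1 - t) * (t * A\<^sup>2 - P) + c * N - c * (t * A) = (1 - t) * (N * A - P)"
      by (simp add: c_eq power2_eq_square algebra_simps)
    then show ?thesis using CS \<open>A > 0\<close> \<open>1 - t = c / A\<close> assms(1) by simp
  next
    case False
    then have "P \<le> N * c" using CS \<open>N \<ge> 0\<close> by (meson mult_left_mono not_less order.trans)
    then show ?thesis using False by (simp add: t_def mult.commute)
  qed
  have scaled: "L2_set (\<lambda>m. norm (t *\<^sub>R x0 m)) I = t * A"
    unfolding A_def L2_set_norm_scaled using \<open>t \<ge> 0\<close> by simp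
  show ?thesis
    unfolding scaled N_def[symmetric] using three_point gain by (simp add: algebra_simps)
qed

lemma suminf_ennreal_eq_termwise_le_imp_eq:
  fixes f g :: "nat \<Rightarrow> real"
  assumes g_nonneg: "\<And>n. 0 \<le> g n" and le: "\<And>n. g n \<le> f n" and "summable g"
    and eq: "(\<Sum>n. ennreal (f n)) = (\<Sum>n. ennreal (g n))"
  shows "f n = g n"
proof -
  have f_nonneg: "\<And>n. 0 \<le> f n" using g_nonneg le order.trans by blast
  have "(\<Sum>n. ennreal (f n)) \<noteq> top"
    using eq suminf_ennreal2[OF g_nonneg \<open>summable g\<close>] by simp
  then have "summable f" by (rule summable_suminf_not_top[OF f_nonneg])
  then have "suminf f = suminf g"
    using eq \<open>summable g\<close> by (simp add: suminf_ennreal2 f_nonneg g_nonneg suminf_nonneg)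
  then have "(\<Sum>n. f n - g n) = 0"
    using suminf_diff[OF \<open>summable f\<close> \<open>summable g\<close>] by simp
  then show ?thesis
    using suminf_eq_zero_iff[OF summable_diff[OF \<open>summable f\<close> \<open>summable g\<close>]] le by auto
qed

lemma group_norm_eq_L2_set: "group_norm a l = L2_set (\<lambda>m. cmod (a l m)) (degree_idx l)"
  by (simp add: group_norm_def L2_set_def)

definition shrink_factor :: "real \<Rightarrow> (nat \<Rightarrow> real) \<Rightarrow> (nat \<Rightarrow> int \<Rightarrow> complex) \<Rightarrow> nat \<Rightarrow> real" where
  "shrink_factor lam beta ao l =
     (if group_norm ao l > lam * beta l then 1 - lam * beta l / group_norm ao l else 0)"

lemma shrink_coeffs_eq_scaleR: "shrink_coeffs lam beta ao l m = shrink_factor lam beta ao l *\<^sub>R ao l m"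
  by (simp add: shrink_coeffs_def shrink_factor_def scaleR_conv_of_real)

definition degree_objective ::
  "real \<Rightarrow> (nat \<Rightarrow> real) \<Rightarrow> (nat \<Rightarrow> int \<Rightarrow> complex) \<Rightarrow> (nat \<Rightarrow> int \<Rightarrow> complex) \<Rightarrow> nat \<Rightarrow> real" where
  "degree_objective lam beta ao a l =
     1/2 * (\<Sum>m\<in>degree_idx l. (cmod (a l m - ao l m))\<^sup>2) + lam * beta l * group_norm a l"

lemma degree_objective_nonneg:
  "lam * beta l \<ge> 0 \<Longrightarrow> degree_objective lam beta ao a l \<ge> 0"
  by (simp add: degree_objective_def group_norm_eq_L2_set sum_nonneg)

lemma objective_eq_suminf_degree_objective:
  assumes "\<And>l. lam * beta l \<ge> 0"
  shows "objective lam beta ao a = (\<Sum>l. ennreal (degree_objective lam beta ao a l))"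
proof -
  have "objective lam beta ao a = (\<Sum>l. ennreal (1/2 * (\<Sum>m\<in>degree_idx l. (cmod (a l m - ao l m))\<^sup>2))
      + ennreal (lam * beta l * group_norm a l))"
    unfolding objective_def by (rule suminf_add) auto
  also have "\<dots> = (\<Sum>l. ennreal (degree_objective lam beta ao a l))"
    unfolding degree_objective_def using assms
    by (intro suminf_cong ennreal_plus[symmetric]) (auto simp: group_norm_eq_L2_set sum_nonneg)
  finally show ?thesis .
qed

lemma degree_objective_shrink_coeffs_le:
  assumes "lam * beta l > 0"
  shows "degree_objective lam beta ao (shrink_coeffs lam beta ao) l
           + 1/2 * (\<Sum>m\<in>degree_idx l. (cmod (a l m - shrink_coeffs lam beta ao l m))\<^sup>2)
         \<le> degree_objective lam beta ao a l"
  unfolding degree_objective_def group_norm_eq_L2_set shrink_coeffs_eq_scaleR shrink_factor_def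
  by (rule block_soft_thresholding_inequality[OF assms])

lemma group_norm_shrink_coeffs:
  assumes "lam * beta l > 0"
  shows "group_norm (shrink_coeffs lam beta ao) l =
           (if group_norm ao l > lam * beta l
            then (1 - lam * beta l / group_norm ao l) * group_norm ao l else 0)"
proof -
  have "shrink_factor lam beta ao l \<ge> 0"
    using assms by (auto simp: shrink_factor_def field_simps)
  then have "group_norm (shrink_coeffs lam beta ao) l = shrink_factor lam beta ao l * group_norm ao l"
    unfolding group_norm_eq_L2_set shrink_coeffs_eq_scaleR L2_set_norm_scaled by simp
  then show ?thesis by (simp add: shrink_factor_def)
qed

lemma degree_objective_shrink_coeffs_minimal:
  assumes "lam * beta l > 0"
  shows "degree_objective lam beta ao (shrink_coeffs lam beta ao) l \<le> degree_objective lam beta ao a l"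
proof -
  have "0 \<le> (\<Sum>m\<in>degree_idx l. (cmod (a l m - shrink_coeffs lam beta ao l m))\<^sup>2)"
    by (simp add: sum_nonneg)
  then show ?thesis
    using degree_objective_shrink_coeffs_le[where lam = lam and beta = beta and ao = ao and a = a, OF assms]
    by linarith
qed

lemma objective_shrink_coeffs_le:
  assumes "\<And>l. lam * beta l > 0"
  shows "objective lam beta ao (shrink_coeffs lam beta ao) \<le> objective lam beta ao a"
  unfolding objective_eq_suminf_degree_objective[OF less_imp_le[OF assms]]
  by (intro suminf_le ennreal_leI degree_objective_shrink_coeffs_minimal assms) auto

lemma summable_degree_objective_shrink_coeffs:
  assumes "\<And>l. lam * beta l > 0"
    and "summable (\<lambda>l. \<Sum>m\<in>degree_idx l. (cmod (ao l m))\<^sup>2)"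
  shows "summable (degree_objective lam beta ao (shrink_coeffs lam beta ao))"
proof (rule summable_comparison_test)
  show "summable (\<lambda>l. 1/2 * (\<Sum>m\<in>degree_idx l. (cmod (ao l m))\<^sup>2))"
    using assms(2) by (rule summable_mult)
  have "degree_objective lam beta ao (\<lambda>_ _. 0) l = 1/2 * (\<Sum>m\<in>degree_idx l. (cmod (ao l m))\<^sup>2)" for l
    by (simp add: degree_objective_def group_norm_def)
  then show "\<exists>N. \<forall>l\<ge>N. norm (degree_objective lam beta ao (shrink_coeffs lam beta ao) l)
               \<le> 1/2 * (\<Sum>m\<in>degree_idx l. (cmod (ao l m))\<^sup>2)"
    using degree_objective_shrink_coeffs_minimal[where a = "\<lambda>_ _. 0"]
      degree_objective_nonneg[where a = "shrink_coeffs lam beta ao"] assms(1) less_imp_le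
    by (metis real_norm_def abs_of_nonneg)
qed

lemma objective_shrink_coeffs_finite:
  assumes "\<And>l. lam * beta l > 0"
    and "summable (\<lambda>l. \<Sum>m\<in>degree_idx l. (cmod (ao l m))\<^sup>2)"
  shows "objective lam beta ao (shrink_coeffs lam beta ao) < \<infinity>"
proof -
  have "\<And>l. degree_objective lam beta ao (shrink_coeffs lam beta ao) l \<ge> 0"
    using assms(1) by (simp add: degree_objective_nonneg less_imp_le)
  then show ?thesis
    unfolding objective_eq_suminf_degree_objective[OF less_imp_le[OF assms(1)]]
    by (simp add: suminf_ennreal2 summable_degree_objective_shrink_coeffs assms)
qed

lemma objective_eq_shrink_coeffs_imp_eq:
  assumes pos: "\<And>l. lam * beta l > 0"
    and L2: "summable (\<lambda>l. \<Sum>m\<in>degree_idx l. (cmod (ao l m))\<^sup>2)"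
    and eq: "objective lam beta ao a = objective lam beta ao (shrink_coeffs lam beta ao)"
    and m: "m \<in> degree_idx l"
  shows "a l m = shrink_coeffs lam beta ao l m"
proof -
  have "degree_objective lam beta ao a l = degree_objective lam beta ao (shrink_coeffs lam beta ao) l"
    using eq unfolding objective_eq_suminf_degree_objective[OF less_imp_le[OF pos]]
    by (intro suminf_ennreal_eq_termwise_le_imp_eq degree_objective_nonneg
        degree_objective_shrink_coeffs_minimal summable_degree_objective_shrink_coeffs
        less_imp_le pos L2)
  moreover have "0 \<le> (\<Sum>m\<in>degree_idx l. (cmod (a l m - shrink_coeffs lam beta ao l m))\<^sup>2)"
    by (simp add: sum_nonneg)
  ultimately have "(\<Sum>m\<in>degree_idx l. (cmod (a l m - shrink_coeffs lam beta ao l m))\<^sup>2) = 0"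
    using degree_objective_shrink_coeffs_le[where lam = lam and beta = beta and ao = ao and a = a and l = l, OF pos]
    by linarith
  then show ?thesis
    using m by (simp add: sum_nonneg_eq_0_iff degree_idx_def)
qed

theorem proposition3p1:
  fixes ao :: "nat \<Rightarrow> int \<Rightarrow> complex"
    and beta :: "nat \<Rightarrow> real"
    and lam :: real
  assumes L2: "summable (\<lambda>l. \<Sum>m\<in>degree_idx l. (cmod (ao l m))\<^sup>2)"
    and beta_pos: "\<And>l. beta l > 0"
    and lam_pos: "lam > 0"
  shows "(\<forall>a. objective lam beta ao (shrink_coeffs lam beta ao) \<le> objective lam beta ao a)
       \<and> (\<forall>a. objective lam beta ao a = objective lam beta ao (shrink_coeffs lam beta ao)
              \<longrightarrow> (\<forall>l. \<forall>m\<in>degree_idx l. a l m = shrink_coeffs lam beta ao l m))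
       \<and> objective lam beta ao (shrink_coeffs lam beta ao) < \<infinity>
       \<and> (\<forall>l. group_norm (shrink_coeffs lam beta ao) l =
              (if group_norm ao l > lam * beta l
               then (1 - lam * beta l / group_norm ao l) * group_norm ao l else 0))"
proof -
  have pos: "\<And>l. lam * beta l > 0" using beta_pos lam_pos by simp
  show ?thesis
    using objective_shrink_coeffs_le[where beta = beta, OF pos]
      objective_eq_shrink_coeffs_imp_eq[where beta = beta, OF pos L2]
      objective_shrink_coeffs_finite[where beta = beta, OF pos L2]
      group_norm_shrink_coeffs[where beta = beta, OF pos]
    by blast
qed

end
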